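(* Let $d\ge3$. Every $d$-dimensional empirical copula is universally simplified.
   Context: $\mathbb{I}=[0,1]$, $\lambda$ Lebesgue measure. A $d$-dimensional empirical copula is the copula obtained by $d$-linear interpolation of the empirical subcopula of a sample $\mathbf{X}_1,\dots,\mathbf{X}_n$ (without ties) of a $d$-dimensional random vector with continuous marginals; equivalently, there are permutations $\sigma_1,\dots,\sigma_{d-1}$ of $\{1,\dots,n\}$ such that its density is $\hat c_n(\mathbf{u})=n^{d-1}\sum_{i=1}^n\prod_{j=1}^d\mathbf{1}_{I_i^j}(u_j)$ with $I_i^j=((\sigma_j(i)-1)/n,\sigma_j(i)/n]$ for $j\le d-1$ and $I_i^d=((i-1)/n,i/n]$. For a $d$-dimensional copula $C$ and $J\subseteq\{1,\dots,d\}$, $C_J$ denotes the marginal copula of the coordinates in $J$ and $\mu_{C_J}$ its measure. For $J$ with $2\le|J|\le d$ and $L\subseteq J$ with $1\le|L|\le|J|-2$, let $K_{C_J}(\mathbf{t},\cdot)$ be (a version of) the regular conditional distribution of the coordinates in $J\setminus L$ given the coordinates in $L$ equal $\mathbf{t}$ (under $C_J$), so $C_J(\mathbf{u})=\int_{[\mathbf{0},\mathbf{u}_L]}K_{C_J}(\mathbf{t},[\mathbf{0},\mathbf{u}_{J\setminus L}])\,d\mu_{C_L}(\mathbf{t})$, and let $F_{j|L}(\cdot|\mathbf{t})$, $j\in J\setminus L$, be its univariate marginal distribution functions. $C$ is universally simplified if for all such $J,L$ (writing $J\setminus L=\{j_1<\dots<j_m\}$): (U1) there is an $m$-dimensional copula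 $A$ with $C_J(\mathbf{u})=\int_{[\mathbf{0},\mathbf{u}_L]}A(F_{j_1|L}(u_{j_1}|\mathbf{t}),\dots,F_{j_m|L}(u_{j_m}|\mathbf{t}))\,d\mu_{C_L}(\mathbf{t})$ for all $\mathbf{u}\in\mathbb{I}^{|J|}$; and (U2) $F_{j|L}(\cdot|\mathbf{t})$ is continuous for $\mu_{C_L}$-a.e. $\mathbf{t}$, for every $j\in J\setminus L$. *)

theory Defs
  imports "HOL-Probability.Probability" "HOL-Combinatorics.Permutations"
begin

text \<open>Points of the cube over an index set J (subset of the coordinates 1..d) are
  functions nat => real, extensional on J; the product Borel space over J is
  PiM J (\<lambda>_. lborel).\<close>

abbreviation cube_space :: "nat set \<Rightarrow> (nat \<Rightarrow> real) measure" where
  "cube_space J \<equiv> PiM J (\<lambda>_. lborel)"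

definition is_copula :: "nat set \<Rightarrow> ((nat \<Rightarrow> real) \<Rightarrow> real) \<Rightarrow> bool" where
  "is_copula M A \<longleftrightarrow>
     (\<exists>P. prob_space P \<and> sets P = sets (cube_space M) \<and>
        (\<forall>j\<in>M. \<forall>s\<in>{0..1}. measure P {x \<in> space P. x j \<le> s} = s) \<and>
        (\<forall>u. (\<forall>j\<in>M. u j \<in> {0..1}) \<longrightarrow>
               A u = measure P {x \<in> space P. \<forall>j\<in>M. x j \<le> u j}))"

text \<open>Interval I_i^j of the empirical copula (coordinates indexed 1..d, sample index i in 1..n);
  sigma d is taken to be the identity.\<close>
definition emp_interval :: "nat \<Rightarrow> nat \<Rightarrow> (nat \<Rightarrow> nat \<Rightarrow> nat) \<Rightarrow> nat \<Rightarrow> nat \<Rightarrow> real set" where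
  "emp_interval d n \<sigma> i j =
     (let k = (if j = d then i else \<sigma> j i) in {(real k - 1) / real n <.. real k / real n})"

definition emp_density :: "nat \<Rightarrow> nat \<Rightarrow> (nat \<Rightarrow> nat \<Rightarrow> nat) \<Rightarrow> (nat \<Rightarrow> real) \<Rightarrow> real" where
  "emp_density d n \<sigma> u =
     real n ^ (d - 1) * (\<Sum>i\<in>{1..n}. \<Prod>j\<in>{1..d}. indicator (emp_interval d n \<sigma> i j) (u j))"

definition emp_copula_measure :: "nat \<Rightarrow> nat \<Rightarrow> (nat \<Rightarrow> nat \<Rightarrow> nat) \<Rightarrow> (nat \<Rightarrow> real) measure" where
  "emp_copula_measure d n \<sigma> =
     density (cube_space {1..d}) (\<lambda>u. ennreal (emp_density d n \<sigma> u))"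

definition marg :: "(nat \<Rightarrow> real) measure \<Rightarrow> nat set \<Rightarrow> (nat \<Rightarrow> real) measure" where
  "marg \<mu> J = distr \<mu> (cube_space J) (\<lambda>x. restrict x J)"

definition marg_copula :: "(nat \<Rightarrow> real) measure \<Rightarrow> nat set \<Rightarrow> (nat \<Rightarrow> real) \<Rightarrow> real" where
  "marg_copula \<mu> J u = measure (marg \<mu> J) {x \<in> space (cube_space J). \<forall>j\<in>J. x j \<le> u j}"

definition is_rcd ::
  "(nat \<Rightarrow> real) measure \<Rightarrow> nat set \<Rightarrow> nat set \<Rightarrow> ((nat \<Rightarrow> real) \<Rightarrow> (nat \<Rightarrow> real) measure) \<Rightarrow> bool" where
  "is_rcd \<mu> J L K \<longleftrightarrow>
     K \<in> measurable (cube_space L) (subprob_algebra (cube_space (J - L))) \<and>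
     (\<forall>t\<in>space (cube_space L). prob_space (K t)) \<and>
     (\<forall>A\<in>sets (cube_space L). \<forall>B\<in>sets (cube_space (J - L)).
        measure (marg \<mu> J) {x \<in> space (cube_space J). restrict x L \<in> A \<and> restrict x (J - L) \<in> B}
        = (\<integral>t. indicator A t * measure (K t) B \<partial>(marg \<mu> L)))"

definition cond_df :: "((nat \<Rightarrow> real) \<Rightarrow> (nat \<Rightarrow> real) measure) \<Rightarrow> nat \<Rightarrow> real \<Rightarrow> (nat \<Rightarrow> real) \<Rightarrow> real" where
  "cond_df K j s t = measure (K t) {y \<in> space (K t). y j \<le> s}"

definition universally_simplified :: "nat \<Rightarrow> (nat \<Rightarrow> real) measure \<Rightarrow> bool" where
  "universally_simplified d \<mu> \<longleftrightarrow>
    (\<forall>J L. J \<subseteq> {1..d} \<and> 2 \<le> card J \<and> L \<subseteq> J \<and> 1 \<le> card L \<and> card L + 2 \<le> card J \<longrightarrow>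
       (\<exists>K. is_rcd \<mu> J L K) \<and>
       (\<forall>K. is_rcd \<mu> J L K \<longrightarrow>
          \<comment> \<open>(U1)\<close>
          (\<exists>A. is_copula (J - L) A \<and>
             (\<forall>u. (\<forall>j\<in>J. u j \<in> {0..1}) \<longrightarrow>
                marg_copula \<mu> J u =
                (\<integral>t. indicator {t \<in> space (cube_space L). \<forall>j\<in>L. 0 \<le> t j \<and> t j \<le> u j} t
                      * A (\<lambda>j\<in>J - L. cond_df K j (u j) t) \<partial>(marg \<mu> L)))) \<and>
          \<comment> \<open>(U2)\<close>
          (AE t in marg \<mu> L. \<forall>j\<in>J - L. continuous_on UNIV (\<lambda>s. cond_df K j s t))))"

end

theory Submission
  imports Defs
begin

text \<open>The empirical copula is the uniform mixture, over the \<open>n\<close> sample points \<open>i\<close>, of the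
  product measures of the uniform distributions on the intervals \<open>I\<^sub>i\<^sup>j\<close> (the cells).
  In a fixed coordinate the intervals of different sample points are disjoint, so a single
  coordinate \<open>l \<in> L\<close> of a point determines almost surely the cell containing it. Hence the
  kernel sending \<open>t\<close> to the product measure over \<open>J - L\<close> of the cell containing \<open>t\<close> is a
  regular conditional distribution: its marginal distribution functions are continuous
  (piecewise linear) and they are coupled by the independence copula, which gives (U1) and (U2).
  Any other version agrees with it almost everywhere on the countably many sets
  \<open>{y\<^sub>j \<le> q}\<close>, \<open>q\<close> rational, hence by monotonicity and continuity in all conditional
  distribution functions.\<close>

section \<open>Finite products of measures\<close>

lemma indicator_PiE_eq_prod:
  fixes x :: "'a \<Rightarrow> 'b"
  assumes "finite I" "x \<in> extensional I"
  shows "indicator (PiE I A) x = (\<Prod>i\<in>I. indicator (A i) (x i) :: 'c :: comm_semiring_1)"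
proof (cases "\<forall>i\<in>I. x i \<in> A i")
  case True
  then show ?thesis using assms by (simp add: PiE_iff)
next
  case False
  then obtain i where "i \<in> I" "x i \<notin> A i" by auto
  then have "x \<notin> PiE I A" by (auto simp: PiE_iff)
  moreover have "(\<Prod>i\<in>I. indicator (A i) (x i) :: 'c) = 0"
    using assms(1) \<open>i \<in> I\<close> \<open>x i \<notin> A i\<close> by (intro prod_zero bexI[of _ i]) auto
  ultimately show ?thesis by simp
qed

lemma PiM_density:
  fixes N :: "'b measure"
  assumes I: "finite I" and N: "sigma_finite_measure N"
    and f[measurable]: "\<And>i. f i \<in> borel_measurable N"
    and sf: "\<And>i. sigma_finite_measure (density N (f i))"
  shows "PiM I (\<lambda>i. density N (f i)) = density (PiM I (\<lambda>_. N)) (\<lambda>x. \<Prod>i\<in>I. f i (x i))"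
proof -
  interpret D: product_sigma_finite "\<lambda>i. density N (f i)"
    using sf by (simp add: product_sigma_finite_def)
  interpret N: product_sigma_finite "\<lambda>_. N"
    using N by (simp add: product_sigma_finite_def)
  have "density (PiM I (\<lambda>_. N)) (\<lambda>x. \<Prod>i\<in>I. f i (x i)) = PiM I (\<lambda>i. density N (f i))"
  proof (rule D.PiM_eqI[OF I])
    show "sets (density (PiM I (\<lambda>_. N)) (\<lambda>x. \<Prod>i\<in>I. f i (x i)))
        = sets (PiM I (\<lambda>i. density N (f i)))"
      by (simp cong: sets_PiM_cong)
  next
    fix A assume A: "\<And>i. i \<in> I \<Longrightarrow> A i \<in> sets (density N (f i))"
    then have A_sets: "PiE I A \<in> sets (PiM I (\<lambda>_. N))"
      by (intro sets_PiM_I_finite I) auto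
    have "emeasure (density (PiM I (\<lambda>_. N)) (\<lambda>x. \<Prod>i\<in>I. f i (x i))) (PiE I A)
        = (\<integral>\<^sup>+ x. (\<Prod>i\<in>I. f i (x i) * indicator (A i) (x i)) \<partial>PiM I (\<lambda>_. N))"
      using A_sets
      by (auto simp: emeasure_density space_PiM PiE_iff indicator_PiE_eq_prod[OF I] prod.distrib
               intro!: nn_integral_cong)
    also have "\<dots> = (\<Prod>i\<in>I. \<integral>\<^sup>+ y. f i y * indicator (A i) y \<partial>N)"
      using A by (intro N.product_nn_integral_prod I) auto
    also have "\<dots> = (\<Prod>i\<in>I. emeasure (density N (f i)) (A i))"
      using A by (intro prod.cong refl) (simp add: emeasure_density)
    finally show "emeasure (density (PiM I (\<lambda>_. N)) (\<lambda>x. \<Prod>i\<in>I. f i (x i))) (PiE I A)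
        = (\<Prod>i\<in>I. emeasure (density N (f i)) (A i))" .
  qed
  then show ?thesis ..
qed

lemma sets_PiM_restrict_restrict:
  assumes "L \<subseteq> J" "A \<in> sets (PiM L M)" "B \<in> sets (PiM (J - L) M)"
  shows "{x \<in> space (PiM J M). restrict x L \<in> A \<and> restrict x (J - L) \<in> B} \<in> sets (PiM J M)"
proof -
  have [measurable]: "(\<lambda>x. restrict x L) \<in> measurable (PiM J M) (PiM L M)"
    "(\<lambda>x. restrict x (J - L)) \<in> measurable (PiM J M) (PiM (J - L) M)"
    using assms(1) by (auto intro!: measurable_restrict_subset)
  show ?thesis using assms(2,3) by measurable
qed

lemma (in product_sigma_finite) emeasure_PiM_restrict_restrict:
  assumes LJ: "L \<subseteq> J" and J: "finite J"
    and A: "A \<in> sets (PiM L M)" and B: "B \<in> sets (PiM (J - L) M)"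
  shows "emeasure (PiM J M) {x \<in> space (PiM J M). restrict x L \<in> A \<and> restrict x (J - L) \<in> B}
       = emeasure (PiM L M) A * emeasure (PiM (J - L) M) B"
proof -
  let ?S = "{x \<in> space (PiM J M). restrict x L \<in> A \<and> restrict x (J - L) \<in> B}"
  let ?LJ = "PiM L M \<Otimes>\<^sub>M PiM (J - L) M"
  have L: "finite L" using LJ J by (rule finite_subset)
  have JL: "L \<union> (J - L) = J" using LJ by auto
  interpret JL: sigma_finite_measure "PiM (J - L) M"
    using J by (intro sigma_finite) auto
  have merge[measurable]: "merge L (J - L) \<in> measurable ?LJ (PiM J M)"
    using measurable_merge[of L "J - L" M] JL by simp
  have AB: "A \<times> B \<subseteq> space ?LJ"
    using sets.sets_into_space[OF A] sets.sets_into_space[OF B] by (auto simp: space_pair_measure)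
  have "(a, b) \<in> merge L (J - L) -` ?S \<inter> space ?LJ \<longleftrightarrow> (a, b) \<in> A \<times> B" for a b
  proof (cases "(a, b) \<in> space ?LJ")
    case True
    have "L \<inter> (J - L) = {}" by auto
    moreover have "a \<in> extensional L" "b \<in> extensional (J - L)"
      using True by (auto simp: space_pair_measure space_PiM PiE_iff)
    ultimately have "restrict (merge L (J - L) (a, b)) L = a" "restrict (merge L (J - L) (a, b)) (J - L) = b"
      by (simp_all add: extensional_restrict)
    then show ?thesis using True measurable_space[OF merge True] by simp
  next
    case False
    then show ?thesis using AB by blast
  qed
  then have "merge L (J - L) -` ?S \<inter> space ?LJ = A \<times> B"
    unfolding set_eq_iff split_paired_All by blast
  moreover have "distr ?LJ (PiM J M) (merge L (J - L)) = PiM J M"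
    using distr_merge[of L "J - L"] JL L J by simp
  ultimately have "emeasure (PiM J M) ?S = emeasure ?LJ (A \<times> B)"
    using emeasure_distr[OF merge sets_PiM_restrict_restrict[OF LJ A B]] by simp
  also have "\<dots> = emeasure (PiM L M) A * emeasure (PiM (J - L) M) B"
    using A B by (rule JL.emeasure_pair_measure_Times)
  finally show ?thesis .
qed

section \<open>Copulas and regular conditional distributions\<close>

lemma is_copula_prod:
  assumes S: "finite S"
  shows "is_copula S (\<lambda>v. \<Prod>j\<in>S. v j)"
proof -
  define U where "U = uniform_measure lborel {0..1::real}"
  have prob_U: "prob_space U" unfolding U_def by (intro prob_space_uniform_measure) auto
  then interpret U: product_prob_space "\<lambda>_::nat. U" S by (simp add: product_prob_spaceI)
  have sets_U[measurable_cong]: "sets U = sets borel" by (simp add: U_def)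
  have U_atMost: "emeasure U {..s} = ennreal s" if "s \<in> {0..1}" for s
  proof -
    have "{0..1} \<inter> {..s} = {0..s}" using that by auto
    then show ?thesis using that by (simp add: U_def divide_ennreal_def)
  qed
  define P where "P = PiM S (\<lambda>_. U)"
  have space_P: "space P = space (cube_space S)" by (simp add: P_def space_PiM U_def)
  show ?thesis unfolding is_copula_def
  proof (intro exI[of _ P] conjI ballI allI impI)
    show "prob_space P" unfolding P_def by (rule prob_space_PiM) (rule prob_U)
    show "sets P = sets (cube_space S)" unfolding P_def by (rule sets_PiM_cong) (auto simp: sets_U)
  next
    fix j s assume j: "j \<in> S" and s: "s \<in> {0..1::real}"
    have "emeasure P {x \<in> space P. x j \<in> {..s}} = emeasure U {..s}"
      unfolding P_def using j by (rule U.emeasure_PiM_Collect_single) (simp add: sets_U)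
    then show "measure P {x \<in> space P. x j \<le> s} = s" using U_atMost[OF s] s by (simp add: measure_def)
  next
    fix u :: "nat \<Rightarrow> real" assume u: "\<forall>j\<in>S. u j \<in> {0..1}"
    have "{x \<in> space P. \<forall>j\<in>S. x j \<le> u j} = PiE S (\<lambda>j. {..u j})"
      by (rule set_eqI) (simp add: space_P space_PiM PiE_iff conj_commute)
    moreover have "emeasure P (PiE S (\<lambda>j. {..u j})) = (\<Prod>j\<in>S. emeasure U {..u j})"
      unfolding P_def using S by (rule U.emeasure_PiM) (simp add: sets_U)
    moreover have "(\<Prod>j\<in>S. emeasure U {..u j}) = ennreal (\<Prod>j\<in>S. u j)"
      using u by (subst prod_ennreal[symmetric]) (auto simp: U_atMost intro!: prod.cong)
    ultimately show "(\<Prod>j\<in>S. u j) = measure P {x \<in> space P. \<forall>j\<in>S. x j \<le> u j}"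
      using u by (simp add: measure_def prod_nonneg)
  qed
qed

lemma sets_marg[measurable_cong]: "sets (marg \<mu> J) = sets (cube_space J)"
  by (simp add: marg_def)

lemma space_marg[simp]: "space (marg \<mu> J) = space (cube_space J)"
  by (simp add: marg_def)

lemma measurable_rcd:
  "is_rcd \<mu> J L K \<Longrightarrow> K \<in> measurable (cube_space L) (subprob_algebra (cube_space (J - L)))"
  by (simp add: is_rcd_def)

lemma prob_space_rcd: "is_rcd \<mu> J L K \<Longrightarrow> t \<in> space (cube_space L) \<Longrightarrow> prob_space (K t)"
  by (simp add: is_rcd_def)

lemma sets_rcd:
  "is_rcd \<mu> J L K \<Longrightarrow> t \<in> space (cube_space L) \<Longrightarrow> sets (K t) = sets (cube_space (J - L))"
  using measurable_space[OF measurable_rcd] by (simp add: space_subprob_algebra)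

lemma cond_df_rcd:
  assumes "is_rcd \<mu> J L K" "t \<in> space (cube_space L)"
  shows "cond_df K j s t = measure (K t) {y \<in> space (cube_space (J - L)). y j \<le> s}"
  using sets_eq_imp_space_eq[OF sets_rcd[OF assms]] by (simp add: cond_df_def)

lemma measurable_cond_df:
  assumes K: "is_rcd \<mu> J L K" and j: "j \<in> J - L"
  shows "(\<lambda>t. cond_df K j s t) \<in> borel_measurable (cube_space L)"
proof -
  note measurable_rcd[OF K, measurable]
  have [measurable]: "{y \<in> space (cube_space (J - L)). y j \<le> s} \<in> sets (cube_space (J - L))"
    using j by measurable
  have "(\<lambda>t. measure (K t) {y \<in> space (cube_space (J - L)). y j \<le> s}) \<in> borel_measurable (cube_space L)"
    by measurable
  then show ?thesis by (rule measurable_cong[THEN iffD1, rotated]) (simp add: cond_df_rcd[OF K])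
qed

lemma mono_cond_df:
  assumes K: "is_rcd \<mu> J L K" and t: "t \<in> space (cube_space L)" and j: "j \<in> J - L"
  shows "mono (\<lambda>s. cond_df K j s t)"
proof
  interpret prob_space "K t" using prob_space_rcd[OF K t] .
  fix s s' :: real assume "s \<le> s'"
  moreover have "{y \<in> space (cube_space (J - L)). y j \<le> s'} \<in> sets (K t)"
    unfolding sets_rcd[OF K t] using j by measurable
  ultimately show "cond_df K j s t \<le> cond_df K j s' t"
    unfolding cond_df_rcd[OF K t] by (intro finite_measure_mono) auto
qed

lemma is_rcd_AE_eq:
  assumes K: "is_rcd \<mu> J L K" and K': "is_rcd \<mu> J L K'" and fin: "finite_measure (marg \<mu> L)"
    and B: "B \<in> sets (cube_space (J - L))"
  shows "AE t in marg \<mu> L. measure (K t) B = measure (K' t) B"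
proof (rule density_unique_real)
  interpret finite_measure "marg \<mu> L" by (fact fin)
  have "integrable (marg \<mu> L) (\<lambda>t. measure (K t) B)" if K: "is_rcd \<mu> J L K" for K
  proof (rule integrable_const_bound[where B=1])
    show "AE t in marg \<mu> L. norm (measure (K t) B) \<le> 1"
      using prob_space.prob_le_1[OF prob_space_rcd[OF K]] by (intro AE_I2) simp
    show "(\<lambda>t. measure (K t) B) \<in> borel_measurable (marg \<mu> L)"
      using measurable_rcd[OF K] B by measurable
  qed
  then show "integrable (marg \<mu> L) (\<lambda>t. measure (K t) B)" "integrable (marg \<mu> L) (\<lambda>t. measure (K' t) B)"
    using K K' by blast+
  fix A assume "A \<in> sets (marg \<mu> L)"
  then have A: "A \<in> sets (cube_space L)" by (simp add: sets_marg)
  let ?S = "{x \<in> space (cube_space J). restrict x L \<in> A \<and> restrict x (J - L) \<in> B}"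
  have "(\<integral>t\<in>A. measure (K t) B \<partial>marg \<mu> L) = measure (marg \<mu> J) ?S"
    using K A B by (simp add: is_rcd_def set_lebesgue_integral_def)
  also have "\<dots> = (\<integral>t\<in>A. measure (K' t) B \<partial>marg \<mu> L)"
    using K' A B by (simp add: is_rcd_def set_lebesgue_integral_def)
  finally show "(\<integral>t\<in>A. measure (K t) B \<partial>marg \<mu> L)
      = (\<integral>t\<in>A. measure (K' t) B \<partial>marg \<mu> L)" .
qed

lemma mono_eq_continuous_on_Rats:
  fixes f g :: "real \<Rightarrow> real"
  assumes mono: "mono f" and cont: "continuous_on UNIV g"
    and eq: "\<And>q. q \<in> \<rat> \<Longrightarrow> f q = g q"
  shows "f s = g s"
proof (rule ccontr)
  assume ne: "f s \<noteq> g s"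
  have "isCont g s" using cont by (simp add: continuous_on_eq_continuous_at)
  then obtain \<delta> where \<delta>: "\<delta> > 0"
    "\<And>y. \<bar>y - s\<bar> < \<delta> \<Longrightarrow> \<bar>g y - g s\<bar> < \<bar>f s - g s\<bar>"
    using ne unfolding continuous_at_eps_delta dist_real_def by (metis zero_less_abs_iff right_minus_eq)
  show False
  proof (cases "g s < f s")
    case True
    obtain q where q: "q \<in> \<rat>" "s < q" "q < s + \<delta>"
      using Rats_dense_in_real[of s "s + \<delta>"] \<delta>(1) by auto
    have "f s \<le> g q" using mono q eq[of q] by (metis monoD less_imp_le)
    then show False using \<delta>(2)[of q] q True by auto
  next
    case False
    obtain q where q: "q \<in> \<rat>" "s - \<delta> < q" "q < s"
      using Rats_dense_in_real[of "s - \<delta>" s] \<delta>(1) by auto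
    have "g q \<le> f s" using mono q eq[of q] by (metis monoD less_imp_le)
    then show False using \<delta>(2)[of q] q False ne by auto
  qed
qed

text \<open>Two kernels agree a.e. on each fixed set, with a null set depending on the set; continuity
  of one family of distribution functions lets countably many sets \<open>{y\<^sub>j \<le> q}\<close> suffice.\<close>

lemma cond_df_AE_eq_if_continuous:
  assumes K: "is_rcd \<mu> J L K" and K': "is_rcd \<mu> J L K'" and J: "finite J"
    and fin: "finite_measure (marg \<mu> L)"
    and cont: "AE t in marg \<mu> L. \<forall>j\<in>J - L. continuous_on UNIV (\<lambda>s. cond_df K' j s t)"
  shows "AE t in marg \<mu> L. \<forall>j\<in>J - L. \<forall>s. cond_df K j s t = cond_df K' j s t"
proof -
  have "AE t in marg \<mu> L. \<forall>j\<in>J - L. \<forall>q\<in>\<rat>.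
          measure (K t) {y \<in> space (cube_space (J - L)). y j \<le> q}
        = measure (K' t) {y \<in> space (cube_space (J - L)). y j \<le> q}"
  proof (intro AE_ball_countable' countable_rat countable_finite is_rcd_AE_eq[OF K K' fin])
    fix j assume "j \<in> J - L"
    then show "{y \<in> space (cube_space (J - L)). y j \<le> q} \<in> sets (cube_space (J - L))" for q
      by measurable
  qed (use J in simp)
  with cont AE_space show ?thesis
  proof eventually_elim
    case (elim t)
    then have t: "t \<in> space (cube_space L)" by simp
    show ?case
    proof (intro ballI allI)
      fix j s assume j: "j \<in> J - L"
      show "cond_df K j s t = cond_df K' j s t"
      proof (rule mono_eq_continuous_on_Rats[OF mono_cond_df[OF K t j], where g="\<lambda>s. cond_df K' j s t"])
        show "continuous_on UNIV (\<lambda>s. cond_df K' j s t)" using elim j by blast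
        show "cond_df K j q t = cond_df K' j q t" if "q \<in> \<rat>" for q
          using elim j that by (simp add: cond_df_rcd[OF K t] cond_df_rcd[OF K' t])
      qed
    qed
  qed
qed

section \<open>The empirical copula as a mixture of cells\<close>

locale empirical_copula =
  fixes d n :: nat and \<sigma> :: "nat \<Rightarrow> nat \<Rightarrow> nat"
  assumes d_pos: "d \<ge> 1" and n_pos: "n \<ge> 1" and permutes: "\<forall>j\<in>{1..d-1}. \<sigma> j permutes {1..n}"
begin

abbreviation \<mu> :: "(nat \<Rightarrow> real) measure" where
  "\<mu> \<equiv> emp_copula_measure d n \<sigma>"

definition sample_rank :: "nat \<Rightarrow> nat \<Rightarrow> nat" where
  "sample_rank j i = (if j = d then i else \<sigma> j i)"

lemma emp_interval_eq:
  "emp_interval d n \<sigma> i j = {(real (sample_rank j i) - 1) / n <.. real (sample_rank j i) / n}"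
  by (simp add: emp_interval_def sample_rank_def Let_def)

lemma n_gt_0: "real n > 0"
  using n_pos by simp

lemma sample_rank_in: "j \<in> {1..d} \<Longrightarrow> i \<in> {1..n} \<Longrightarrow> sample_rank j i \<in> {1..n}"
  using permutes permutes_in_image[of "\<sigma> j" "{1..n}" i] by (auto simp: sample_rank_def)

lemma sample_rank_inj:
  assumes "j \<in> {1..d}" "sample_rank j i = sample_rank j i'"
  shows "i = i'"
proof (cases "j = d")
  case True
  then show ?thesis using assms by (simp add: sample_rank_def)
next
  case False
  then have "\<sigma> j permutes {1..n}" using permutes assms by auto
  then show ?thesis using assms False by (auto simp: sample_rank_def dest: permutes_inj injD)
qed

lemma emp_interval_disjoint:
  assumes "x \<in> emp_interval d n \<sigma> i j" "x \<in> emp_interval d n \<sigma> i' j"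
  shows "sample_rank j i = sample_rank j i'"
proof -
  have "real (sample_rank j i) - 1 < x * n" "x * n \<le> real (sample_rank j i)"
    "real (sample_rank j i') - 1 < x * n" "x * n \<le> real (sample_rank j i')"
    using assms n_gt_0 by (auto simp: emp_interval_eq field_simps)
  then show ?thesis by linarith
qed

lemma lborel_emp_interval: "emeasure lborel (emp_interval d n \<sigma> i j) = ennreal (1 / n)"
  using n_gt_0 by (simp add: emp_interval_eq divide_right_mono diff_divide_distrib[symmetric])

definition cell_density :: "nat \<Rightarrow> nat \<Rightarrow> real \<Rightarrow> ennreal" where
  "cell_density i j x = ennreal (real n * indicator (emp_interval d n \<sigma> i j) x)"

definition cell_marginal :: "nat \<Rightarrow> nat \<Rightarrow> real measure" where
  "cell_marginal i j = density lborel (cell_density i j)"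

definition cell_measure :: "nat \<Rightarrow> nat set \<Rightarrow> (nat \<Rightarrow> real) measure" where
  "cell_measure i S = PiM S (cell_marginal i)"

lemma measurable_cell_density[measurable]: "cell_density i j \<in> borel_measurable borel"
  unfolding cell_density_def emp_interval_eq by measurable

lemma sets_cell_marginal[simp, measurable_cong]: "sets (cell_marginal i j) = sets borel"
  by (simp add: cell_marginal_def)

lemma emeasure_cell_marginal:
  assumes "A \<in> sets borel"
  shows "emeasure (cell_marginal i j) A = ennreal n * emeasure lborel (emp_interval d n \<sigma> i j \<inter> A)"
proof -
  have "emeasure (cell_marginal i j) A
      = (\<integral>\<^sup>+ x. ennreal n * indicator (emp_interval d n \<sigma> i j \<inter> A) x \<partial>lborel)"
    using assms unfolding cell_marginal_def
    by (auto simp: emeasure_density cell_density_def indicator_def intro!: nn_integral_cong)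
  also have "\<dots> = ennreal n * emeasure lborel (emp_interval d n \<sigma> i j \<inter> A)"
    using assms by (intro nn_integral_cmult_indicator) (auto simp: emp_interval_eq)
  finally show ?thesis .
qed

lemma prob_space_cell_marginal: "prob_space (cell_marginal i j)"
proof
  have "emeasure (cell_marginal i j) (space (cell_marginal i j)) = ennreal n * ennreal (1 / n)"
    by (simp add: cell_marginal_def emeasure_cell_marginal[unfolded cell_marginal_def] lborel_emp_interval)
  also have "\<dots> = 1"
    using n_gt_0 by (simp add: ennreal_mult[symmetric])
  finally show "emeasure (cell_marginal i j) (space (cell_marginal i j)) = 1" .
qed

lemma product_prob_space_cell_marginal: "product_prob_space (cell_marginal i)"
  by (simp add: product_prob_spaceI prob_space_cell_marginal)

lemma sets_cell_measure[measurable_cong]: "sets (cell_measure i S) = sets (cube_space S)"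
  unfolding cell_measure_def by (rule sets_PiM_cong) auto

lemma space_cell_measure[simp]: "space (cell_measure i S) = space (cube_space S)"
  using sets_eq_imp_space_eq[OF sets_cell_measure] .

lemma prob_space_cell_measure: "prob_space (cell_measure i S)"
  unfolding cell_measure_def by (rule prob_space_PiM) (rule prob_space_cell_marginal)

definition cell_cdf :: "nat \<Rightarrow> nat \<Rightarrow> real \<Rightarrow> real" where
  "cell_cdf i j s = real n * max 0 (min (real (sample_rank j i) / n) s - (real (sample_rank j i) - 1) / n)"

lemma cell_cdf_nonneg: "0 \<le> cell_cdf i j s"
  by (simp add: cell_cdf_def)

lemma continuous_on_cell_cdf: "continuous_on UNIV (cell_cdf i j)"
  unfolding cell_cdf_def by (intro continuous_intros)

lemma emeasure_cell_marginal_atMost: "emeasure (cell_marginal i j) {..s} = ennreal (cell_cdf i j s)"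
proof -
  let ?a = "(real (sample_rank j i) - 1) / n" and ?b = "real (sample_rank j i) / n"
  have ab: "?a < ?b" using n_gt_0 by (simp add: divide_strict_right_mono)
  show ?thesis
  proof (cases "s \<le> ?a")
    case True
    then have "emp_interval d n \<sigma> i j \<inter> {..s} = {}" by (auto simp: emp_interval_eq)
    then show ?thesis using True by (simp add: emeasure_cell_marginal cell_cdf_def)
  next
    case False
    then have "emp_interval d n \<sigma> i j \<inter> {..s} = {?a<..min ?b s}" by (auto simp: emp_interval_eq)
    then show ?thesis using False ab by (simp add: emeasure_cell_marginal cell_cdf_def ennreal_mult)
  qed
qed

lemma emeasure_cell_marginal_atLeastAtMost:
  assumes "i \<in> {1..n}" "j \<in> {1..d}"
  shows "emeasure (cell_marginal i j) {0..s} = emeasure (cell_marginal i j) {..s}"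
proof -
  have "0 \<le> (real (sample_rank j i) - 1) / n"
    using sample_rank_in[OF assms(2,1)] n_gt_0 by simp
  then have "emp_interval d n \<sigma> i j \<inter> {0..s} = emp_interval d n \<sigma> i j \<inter> {..s}"
    by (auto simp: emp_interval_eq)
  then show ?thesis by (simp add: emeasure_cell_marginal)
qed

lemma emeasure_cell_measure_PiE:
  assumes "finite S" "\<And>j. j \<in> S \<Longrightarrow> A j \<in> sets borel"
  shows "emeasure (cell_measure i S) (PiE S A) = (\<Prod>j\<in>S. emeasure (cell_marginal i j) (A j))"
proof -
  interpret product_prob_space "cell_marginal i" S by (rule product_prob_space_cell_marginal)
  show ?thesis unfolding cell_measure_def using assms by (intro emeasure_PiM) auto
qed

lemma measure_cell_measure_box:
  assumes S: "finite S" "S \<subseteq> {1..d}" and i: "i \<in> {1..n}"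
  shows "measure (cell_measure i S) (PiE S (\<lambda>j. {..u j})) = (\<Prod>j\<in>S. cell_cdf i j (u j))"
    and "measure (cell_measure i S) (PiE S (\<lambda>j. {0..u j})) = (\<Prod>j\<in>S. cell_cdf i j (u j))"
proof -
  have "(\<Prod>j\<in>S. emeasure (cell_marginal i j) {0..u j}) = (\<Prod>j\<in>S. emeasure (cell_marginal i j) {..u j})"
    using S i by (intro prod.cong refl emeasure_cell_marginal_atLeastAtMost) auto
  moreover have "(\<Prod>j\<in>S. emeasure (cell_marginal i j) {..u j}) = ennreal (\<Prod>j\<in>S. cell_cdf i j (u j))"
    by (simp add: emeasure_cell_marginal_atMost prod_ennreal cell_cdf_nonneg)
  ultimately show "measure (cell_measure i S) (PiE S (\<lambda>j. {..u j})) = (\<Prod>j\<in>S. cell_cdf i j (u j))"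
    and "measure (cell_measure i S) (PiE S (\<lambda>j. {0..u j})) = (\<Prod>j\<in>S. cell_cdf i j (u j))"
    using S by (simp_all add: measure_def emeasure_cell_measure_PiE prod_nonneg cell_cdf_nonneg)
qed

lemma measure_cell_measure_coordinate:
  assumes "j \<in> S"
  shows "measure (cell_measure i S) {y \<in> space (cube_space S). y j \<le> s} = cell_cdf i j s"
proof -
  interpret product_prob_space "cell_marginal i" S by (rule product_prob_space_cell_marginal)
  have "emeasure (cell_measure i S) {y \<in> space (cell_measure i S). y j \<in> {..s}} = emeasure (cell_marginal i j) {..s}"
    unfolding cell_measure_def using assms by (rule emeasure_PiM_Collect_single) simp
  then show ?thesis
    by (simp add: measure_def emeasure_cell_marginal_atMost cell_cdf_nonneg)
qed

lemma emp_density_eq_sum_cells: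
  "ennreal (emp_density d n \<sigma> x) = (\<Sum>i\<in>{1..n}. ennreal (1 / n) * (\<Prod>j\<in>{1..d}. cell_density i j (x j)))"
proof -
  let ?P = "\<lambda>i. \<Prod>j\<in>{1..d}. indicator (emp_interval d n \<sigma> i j) (x j) :: real"
  have "ennreal (1 / n) * (\<Prod>j\<in>{1..d}. cell_density i j (x j)) = ennreal (n ^ (d - 1) * ?P i)" for i
  proof -
    have "(\<Prod>j\<in>{1..d}. cell_density i j (x j)) = ennreal (n ^ d * ?P i)"
      unfolding cell_density_def by (simp add: prod_ennreal prod.distrib)
    moreover have "1 / n * (n ^ d * ?P i) = n ^ (d - 1) * ?P i"
      using d_pos n_gt_0 by (simp add: power_eq_if)
    ultimately show ?thesis
      by (simp add: ennreal_mult[symmetric] prod_nonneg)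
  qed
  then show ?thesis
    by (simp add: emp_density_def emp_interval_def sum_distrib_left sum_ennreal prod_nonneg)
qed

lemma cell_measure_eq_density:
  "cell_measure i {1..d} = density (cube_space {1..d}) (\<lambda>x. \<Prod>j\<in>{1..d}. cell_density i j (x j))"
  unfolding cell_measure_def cell_marginal_def
  using prob_space_cell_marginal[unfolded cell_marginal_def]
  by (intro PiM_density) (auto simp: lborel.sigma_finite_measure_axioms prob_space_imp_sigma_finite)

lemma nn_integral_emp_copula_measure:
  assumes f[measurable]: "f \<in> borel_measurable (cube_space {1..d})"
  shows "(\<integral>\<^sup>+ x. f x \<partial>\<mu>)
       = (\<Sum>i\<in>{1..n}. ennreal (1 / n) * (\<integral>\<^sup>+ x. f x \<partial>cell_measure i {1..d}))"
proof -
  have "\<mu> = density (cube_space {1..d})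
      (\<lambda>x. \<Sum>i\<in>{1..n}. ennreal (1 / n) * (\<Prod>j\<in>{1..d}. cell_density i j (x j)))"
    unfolding emp_copula_measure_def by (simp only: emp_density_eq_sum_cells)
  then have "(\<integral>\<^sup>+ x. f x \<partial>\<mu>) = (\<integral>\<^sup>+ x. (\<Sum>i\<in>{1..n}. ennreal (1 / n) *
      (\<Prod>j\<in>{1..d}. cell_density i j (x j))) * f x \<partial>cube_space {1..d})"
    by (simp only:) (rule nn_integral_density; measurable)
  also have "\<dots> = (\<integral>\<^sup>+ x. (\<Sum>i\<in>{1..n}. ennreal (1 / n) *
      ((\<Prod>j\<in>{1..d}. cell_density i j (x j)) * f x)) \<partial>cube_space {1..d})"
    by (simp add: sum_distrib_right mult.assoc)
  also have "\<dots> = (\<Sum>i\<in>{1..n}. ennreal (1 / n) *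
      (\<integral>\<^sup>+ x. (\<Prod>j\<in>{1..d}. cell_density i j (x j)) * f x \<partial>cube_space {1..d}))"
    by (subst nn_integral_sum) (measurable, intro sum.cong refl nn_integral_cmult, measurable)
  also have "\<dots> = (\<Sum>i\<in>{1..n}. ennreal (1 / n) * (\<integral>\<^sup>+ x. f x \<partial>cell_measure i {1..d}))"
    unfolding cell_measure_eq_density by (subst nn_integral_density; measurable)
  finally show ?thesis .
qed

lemma nn_integral_marg:
  assumes J: "J \<subseteq> {1..d}" and g[measurable]: "g \<in> borel_measurable (cube_space J)"
  shows "(\<integral>\<^sup>+ x. g x \<partial>marg \<mu> J)
       = (\<Sum>i\<in>{1..n}. ennreal (1 / n) * (\<integral>\<^sup>+ x. g x \<partial>cell_measure i J))"
proof -
  have restrict_J[measurable]: "(\<lambda>x. restrict x J) \<in> measurable (cube_space {1..d}) (cube_space J)"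
    using J by (rule measurable_restrict_subset)
  then have "(\<lambda>x. restrict x J) \<in> measurable \<mu> (cube_space J)"
    by (simp add: emp_copula_measure_def measurable_cong_sets[OF sets_density refl])
  then have "(\<integral>\<^sup>+ x. g x \<partial>marg \<mu> J) = (\<integral>\<^sup>+ x. g (restrict x J) \<partial>\<mu>)"
    unfolding marg_def by (rule nn_integral_distr) simp
  also have "\<dots> = (\<Sum>i\<in>{1..n}. ennreal (1 / n) * (\<integral>\<^sup>+ x. g (restrict x J) \<partial>cell_measure i {1..d}))"
    by (rule nn_integral_emp_copula_measure) measurable
  also have "\<dots> = (\<Sum>i\<in>{1..n}. ennreal (1 / n) * (\<integral>\<^sup>+ x. g x \<partial>cell_measure i J))"
  proof (intro sum.cong refl arg_cong[where f="(*) (ennreal (1 / n))"])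
    fix i
    interpret product_prob_space "cell_marginal i" "{1..d}" by (rule product_prob_space_cell_marginal)
    have "cell_measure i J = distr (cell_measure i {1..d}) (cell_measure i J) (\<lambda>x. restrict x J)"
      unfolding cell_measure_def using J by (intro distr_restrict) auto
    then have "(\<integral>\<^sup>+ x. g x \<partial>cell_measure i J)
        = (\<integral>\<^sup>+ x. g x \<partial>distr (cell_measure i {1..d}) (cell_measure i J) (\<lambda>x. restrict x J))"
      by (rule arg_cong)
    also have "\<dots> = (\<integral>\<^sup>+ x. g (restrict x J) \<partial>cell_measure i {1..d})"
      using restrict_J
      by (intro nn_integral_distr) (simp_all add: measurable_cong_sets[OF sets_cell_measure sets_cell_measure])
    finally show "(\<integral>\<^sup>+ x. g (restrict x J) \<partial>cell_measure i {1..d})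
        = (\<integral>\<^sup>+ x. g x \<partial>cell_measure i J)"
      by (rule sym)
  qed
  finally show ?thesis .
qed

lemma emeasure_marg:
  assumes "J \<subseteq> {1..d}" "X \<in> sets (cube_space J)"
  shows "emeasure (marg \<mu> J) X = (\<Sum>i\<in>{1..n}. ennreal (1 / n) * emeasure (cell_measure i J) X)"
  using nn_integral_marg[OF assms(1), of "indicator X"] assms(2)
  by (simp add: sets_marg sets_cell_measure)

lemma measure_marg:
  assumes "J \<subseteq> {1..d}" "X \<in> sets (cube_space J)"
  shows "measure (marg \<mu> J) X = (\<Sum>i\<in>{1..n}. measure (cell_measure i J) X) / n"
proof -
  have "ennreal (1 / n) * emeasure (cell_measure i J) X = ennreal (measure (cell_measure i J) X / n)" for i
  proof -
    interpret prob_space "cell_measure i J" by (rule prob_space_cell_measure)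
    show ?thesis by (simp add: emeasure_eq_measure ennreal_mult[symmetric])
  qed
  then have "emeasure (marg \<mu> J) X = ennreal ((\<Sum>i\<in>{1..n}. measure (cell_measure i J) X) / n)"
    by (simp add: emeasure_marg[OF assms] sum_ennreal sum_divide_distrib)
  then show ?thesis
    by (simp add: measure_def sum_nonneg)
qed

lemma prob_space_marg:
  assumes "J \<subseteq> {1..d}"
  shows "prob_space (marg \<mu> J)"
proof
  have "emeasure (marg \<mu> J) (space (marg \<mu> J)) = (\<Sum>i\<in>{1..n}. ennreal (1 / n))"
    using emeasure_marg[OF assms, of "space (cube_space J)"]
      prob_space.emeasure_space_1[OF prob_space_cell_measure]
    by simp
  also have "\<dots> = 1"
    using n_gt_0 by (simp add: ennreal_of_nat_eq_real_of_nat ennreal_mult[symmetric])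
  finally show "emeasure (marg \<mu> J) (space (marg \<mu> J)) = 1" .
qed

subsection \<open>Conditioning on the coordinates in \<open>L\<close>\<close>

definition cell_of :: "nat \<Rightarrow> (nat \<Rightarrow> real) \<Rightarrow> nat" where
  "cell_of l t = (LEAST i. i \<in> {1..n} \<and> t l \<in> emp_interval d n \<sigma> i l)"

lemma cell_of_eq:
  assumes "l \<in> {1..d}" "i \<in> {1..n}" "t l \<in> emp_interval d n \<sigma> i l"
  shows "cell_of l t = i"
  unfolding cell_of_def
proof (rule Least_equality)
  fix i' assume "i' \<in> {1..n} \<and> t l \<in> emp_interval d n \<sigma> i' l"
  then have "i' = i" using assms sample_rank_inj emp_interval_disjoint by metis
  then show "i \<le> i'" by simp
qed (use assms in simp)

lemma measurable_cell_of[measurable]: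
  "l \<in> L \<Longrightarrow> cell_of l \<in> measurable (cube_space L) (count_space UNIV)"
  unfolding cell_of_def emp_interval_eq by measurable

lemma AE_cell_of:
  assumes "l \<in> L" "L \<subseteq> {1..d}" "i \<in> {1..n}"
  shows "AE t in cell_measure i L. cell_of l t = i"
proof -
  have "AE x in cell_marginal i l. x \<in> emp_interval d n \<sigma> i l"
    unfolding cell_marginal_def by (subst AE_density) (auto simp: cell_density_def indicator_def)
  then have "AE t in cell_measure i L. t l \<in> emp_interval d n \<sigma> i l"
    unfolding cell_measure_def using assms(1) by (intro AE_PiM_component prob_space_cell_marginal)
  then show ?thesis
    by eventually_elim (use assms in \<open>auto intro!: cell_of_eq\<close>)
qed

definition cell_kernel :: "nat \<Rightarrow> nat set \<Rightarrow> (nat \<Rightarrow> real) \<Rightarrow> (nat \<Rightarrow> real) measure" where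
  "cell_kernel l S t = cell_measure (cell_of l t) S"

lemma measurable_cell_kernel:
  assumes "l \<in> L"
  shows "cell_kernel l S \<in> measurable (cube_space L) (subprob_algebra (cube_space S))"
proof -
  have "(\<lambda>i. cell_measure i S) \<in> measurable (count_space UNIV) (subprob_algebra (cube_space S))"
    by (auto simp: space_subprob_algebra sets_cell_measure prob_space_cell_measure
        prob_space_imp_subprob_space)
  then show ?thesis
    unfolding cell_kernel_def using measurable_cell_of[OF assms] by measurable
qed

lemma cond_df_cell_kernel: "j \<in> S \<Longrightarrow> cond_df (cell_kernel l S) j s t = cell_cdf (cell_of l t) j s"
  by (simp add: cond_df_def cell_kernel_def measure_cell_measure_coordinate)

lemma integral_marg_cell_of:
  assumes L: "L \<subseteq> {1..d}" "l \<in> L" and A[measurable]: "A \<in> sets (cube_space L)"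
    and F: "\<And>i. 0 \<le> F i"
  shows "(\<integral>t. indicator A t * F (cell_of l t) \<partial>marg \<mu> L)
       = (\<Sum>i\<in>{1..n}. F i * measure (cell_measure i L) A) / n"
proof -
  have [measurable]: "(\<lambda>t. F (cell_of l t)) \<in> borel_measurable (cube_space L)"
    using measurable_cell_of[OF L(2)] by measurable
  have "(\<integral>\<^sup>+t. indicator A t * F (cell_of l t) \<partial>marg \<mu> L)
      = (\<Sum>i\<in>{1..n}. ennreal (1 / n) * (\<integral>\<^sup>+t. indicator A t * F (cell_of l t) \<partial>cell_measure i L))"
    by (intro nn_integral_marg L) measurable
  also have "\<dots> = (\<Sum>i\<in>{1..n}. ennreal (F i * measure (cell_measure i L) A / n))"
  proof (intro sum.cong refl)
    fix i assume i: "i \<in> {1..n}"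
    interpret prob_space "cell_measure i L" by (rule prob_space_cell_measure)
    have "(\<integral>\<^sup>+t. indicator A t * F (cell_of l t) \<partial>cell_measure i L)
        = (\<integral>\<^sup>+t. ennreal (F i) * indicator A t \<partial>cell_measure i L)"
      using AE_cell_of[OF L(2,1) i] by (intro nn_integral_cong_AE) (auto simp: indicator_def)
    also have "\<dots> = ennreal (F i) * emeasure (cell_measure i L) A"
      using A by (intro nn_integral_cmult_indicator) (simp add: sets_cell_measure)
    finally show "ennreal (1 / n) * (\<integral>\<^sup>+t. indicator A t * F (cell_of l t) \<partial>cell_measure i L)
        = ennreal (F i * measure (cell_measure i L) A / n)"
      using F by (simp add: emeasure_eq_measure ennreal_mult[symmetric] mult_ac)
  qed
  also have "\<dots> = ennreal ((\<Sum>i\<in>{1..n}. F i * measure (cell_measure i L) A) / n)"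
    using F by (simp add: sum_ennreal sum_divide_distrib)
  finally show ?thesis
    using F by (subst integral_eq_nn_integral) (auto simp: sum_nonneg)
qed

lemma measure_cell_measure_restrict:
  assumes LJ: "L \<subseteq> J" and J: "finite J"
    and A: "A \<in> sets (cube_space L)" and B: "B \<in> sets (cube_space (J - L))"
  shows "measure (cell_measure i J) {x \<in> space (cube_space J). restrict x L \<in> A \<and> restrict x (J - L) \<in> B}
       = measure (cell_measure i L) A * measure (cell_measure i (J - L)) B"
proof -
  interpret product_prob_space "cell_marginal i" J by (rule product_prob_space_cell_marginal)
  have "emeasure (cell_measure i J) {x \<in> space (cube_space J). restrict x L \<in> A \<and> restrict x (J - L) \<in> B}
      = emeasure (cell_measure i L) A * emeasure (cell_measure i (J - L)) B"
    using emeasure_PiM_restrict_restrict[OF LJ J, of A B] A B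
    by (simp add: cell_measure_def[symmetric] sets_cell_measure)
  then show ?thesis
    by (simp add: measure_def enn2real_mult)
qed

lemma is_rcd_cell_kernel:
  assumes J: "J \<subseteq> {1..d}" and LJ: "L \<subseteq> J" and l: "l \<in> L"
  shows "is_rcd \<mu> J L (cell_kernel l (J - L))"
  unfolding is_rcd_def
proof (intro conjI ballI)
  show "cell_kernel l (J - L) \<in> measurable (cube_space L) (subprob_algebra (cube_space (J - L)))"
    using l by (rule measurable_cell_kernel)
  show "prob_space (cell_kernel l (J - L) t)" for t
    by (simp add: cell_kernel_def prob_space_cell_measure)
next
  fix A B assume A: "A \<in> sets (cube_space L)" and B: "B \<in> sets (cube_space (J - L))"
  have "finite J" using J by (rule finite_subset) simp
  let ?S = "{x \<in> space (cube_space J). restrict x L \<in> A \<and> restrict x (J - L) \<in> B}"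
  have "measure (marg \<mu> J) ?S = (\<Sum>i\<in>{1..n}. measure (cell_measure i J) ?S) / n"
    using J sets_PiM_restrict_restrict[OF LJ A B] by (rule measure_marg)
  also have "\<dots> = (\<Sum>i\<in>{1..n}. measure (cell_measure i (J - L)) B * measure (cell_measure i L) A) / n"
    using measure_cell_measure_restrict[OF LJ \<open>finite J\<close> A B] by (simp add: mult.commute)
  also have "\<dots> = (\<integral>t. indicator A t * measure (cell_kernel l (J - L) t) B \<partial>marg \<mu> L)"
    using integral_marg_cell_of[of L l A "\<lambda>i. measure (cell_measure i (J - L)) B"] J LJ l A
    by (simp add: cell_kernel_def)
  finally show "measure (marg \<mu> J) ?S
      = (\<integral>t. indicator A t * measure (cell_kernel l (J - L) t) B \<partial>marg \<mu> L)" .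
qed

lemma marg_copula_eq_sum_cells:
  assumes J: "J \<subseteq> {1..d}"
  shows "marg_copula \<mu> J u = (\<Sum>i\<in>{1..n}. \<Prod>j\<in>J. cell_cdf i j (u j)) / n"
proof -
  have "finite J" using J by (rule finite_subset) simp
  have box: "{x \<in> space (cube_space J). \<forall>j\<in>J. x j \<le> u j} = PiE J (\<lambda>j. {..u j})"
    by (rule set_eqI) (simp add: space_PiM PiE_iff conj_commute)
  have "PiE J (\<lambda>j. {..u j}) \<in> sets (cube_space J)"
    using \<open>finite J\<close> by (intro sets_PiM_I_finite) auto
  then show ?thesis
    unfolding marg_copula_def box using J
    by (simp add: measure_marg measure_cell_measure_box(1)[OF \<open>finite J\<close> J])
qed

lemma marg_copula_eq_integral_cell_cdf:
  assumes J: "J \<subseteq> {1..d}" and LJ: "L \<subseteq> J" and l: "l \<in> L"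
  shows "marg_copula \<mu> J u
       = (\<integral>t. indicator {t \<in> space (cube_space L). \<forall>j\<in>L. 0 \<le> t j \<and> t j \<le> u j} t
            * (\<Prod>j\<in>J - L. cell_cdf (cell_of l t) j (u j)) \<partial>marg \<mu> L)"
proof -
  have "finite J" using J by (rule finite_subset) simp
  have "finite L" using LJ \<open>finite J\<close> by (rule finite_subset)
  have L: "L \<subseteq> {1..d}" using J LJ by blast
  have box: "{t \<in> space (cube_space L). \<forall>j\<in>L. 0 \<le> t j \<and> t j \<le> u j} = PiE L (\<lambda>j. {0..u j})"
    by (rule set_eqI) (auto simp: space_PiM PiE_iff)
  have box_sets: "PiE L (\<lambda>j. {0..u j}) \<in> sets (cube_space L)"
    using \<open>finite L\<close> by (intro sets_PiM_I_finite) auto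
  have "(\<integral>t. indicator (PiE L (\<lambda>j. {0..u j})) t
          * (\<Prod>j\<in>J - L. cell_cdf (cell_of l t) j (u j)) \<partial>marg \<mu> L)
      = (\<Sum>i\<in>{1..n}. (\<Prod>j\<in>J - L. cell_cdf i j (u j)) * (\<Prod>j\<in>L. cell_cdf i j (u j))) / n"
    using integral_marg_cell_of[OF L l box_sets, of "\<lambda>i. \<Prod>j\<in>J - L. cell_cdf i j (u j)"]
      measure_cell_measure_box(2)[OF \<open>finite L\<close> L]
    by (simp add: prod_nonneg cell_cdf_nonneg)
  also have "\<dots> = marg_copula \<mu> J u"
    by (simp add: marg_copula_eq_sum_cells[OF J] prod.subset_diff[OF LJ \<open>finite J\<close>])
  finally show ?thesis unfolding box ..
qed

lemma cond_df_rcd_AE_eq_cell_cdf: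
  assumes J: "J \<subseteq> {1..d}" and LJ: "L \<subseteq> J" and l: "l \<in> L" and K: "is_rcd \<mu> J L K"
  shows "AE t in marg \<mu> L. \<forall>j\<in>J - L. \<forall>s. cond_df K j s t = cell_cdf (cell_of l t) j s"
proof -
  have "finite J" using J by (rule finite_subset) simp
  interpret prob_space "marg \<mu> L" using J LJ by (intro prob_space_marg) blast
  have "AE t in marg \<mu> L. \<forall>j\<in>J - L. \<forall>s. cond_df K j s t = cond_df (cell_kernel l (J - L)) j s t"
    using K is_rcd_cell_kernel[OF J LJ l] \<open>finite J\<close> finite_measure_axioms
    by (rule cond_df_AE_eq_if_continuous) (simp add: cond_df_cell_kernel continuous_on_cell_cdf)
  then show ?thesis by (simp add: cond_df_cell_kernel)
qed

lemma ex_rcd: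
  assumes J: "J \<subseteq> {1..d}" "L \<subseteq> J" "1 \<le> card L"
  shows "\<exists>K. is_rcd \<mu> J L K"
proof -
  obtain l where "l \<in> L" using J(3) by fastforce
  with J show ?thesis by (blast intro: is_rcd_cell_kernel)
qed

lemma AE_continuous_cond_df_rcd:
  assumes J: "J \<subseteq> {1..d}" "L \<subseteq> J" "1 \<le> card L" and K: "is_rcd \<mu> J L K"
  shows "AE t in marg \<mu> L. \<forall>j\<in>J - L. continuous_on UNIV (\<lambda>s. cond_df K j s t)"
proof -
  obtain l where l: "l \<in> L" using J(3) by fastforce
  show ?thesis
    using cond_df_rcd_AE_eq_cell_cdf[OF J(1,2) l K]
    by eventually_elim (simp add: continuous_on_cell_cdf)
qed

lemma simplifying_copula_rcd:
  assumes J: "J \<subseteq> {1..d}" "L \<subseteq> J" "1 \<le> card L" and K: "is_rcd \<mu> J L K"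
  shows "\<exists>A. is_copula (J - L) A \<and>
           (\<forall>u. (\<forall>j\<in>J. u j \<in> {0..1}) \<longrightarrow>
              marg_copula \<mu> J u =
              (\<integral>t. indicator {t \<in> space (cube_space L). \<forall>j\<in>L. 0 \<le> t j \<and> t j \<le> u j} t
                    * A (\<lambda>j\<in>J - L. cond_df K j (u j) t) \<partial>marg \<mu> L))"
proof -
  obtain l where l: "l \<in> L" using J(3) by fastforce
  have "finite (J - L)" using J(1) by (rule finite_subset[THEN finite_Diff]) simp
  have "marg_copula \<mu> J u
      = (\<integral>t. indicator {t \<in> space (cube_space L). \<forall>j\<in>L. 0 \<le> t j \<and> t j \<le> u j} t
          * (\<Prod>j\<in>J - L. cond_df K j (u j) t) \<partial>marg \<mu> L)" for u
  proof -
    let ?A = "{t \<in> space (cube_space L). \<forall>j\<in>L. 0 \<le> t j \<and> t j \<le> u j}"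
    have [measurable]: "?A \<in> sets (cube_space L)" by measurable
    have [measurable]: "(\<lambda>t. cond_df K j (u j) t) \<in> borel_measurable (cube_space L)" if "j \<in> J - L" for j
      using K that by (rule measurable_cond_df)
    have [measurable]: "cell_of l \<in> measurable (cube_space L) (count_space UNIV)"
      using l by (rule measurable_cell_of)
    have "marg_copula \<mu> J u
        = (\<integral>t. indicator ?A t * (\<Prod>j\<in>J - L. cell_cdf (cell_of l t) j (u j)) \<partial>marg \<mu> L)"
      using J(1,2) l by (rule marg_copula_eq_integral_cell_cdf)
    also have "\<dots> = (\<integral>t. indicator ?A t * (\<Prod>j\<in>J - L. cond_df K j (u j) t) \<partial>marg \<mu> L)"
      using cond_df_rcd_AE_eq_cell_cdf[OF J(1,2) l K]
      by (intro integral_cong_AE) (measurable, auto elim!: eventually_mono)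
    finally show ?thesis .
  qed
  then show ?thesis
    using is_copula_prod[OF \<open>finite (J - L)\<close>] by (intro exI[of _ "\<lambda>v. \<Prod>j\<in>J - L. v j"]) simp
qed

lemma universally_simplified: "universally_simplified d \<mu>"
  unfolding universally_simplified_def
  by (blast intro: ex_rcd simplifying_copula_rcd AE_continuous_cond_df_rcd)

end

theorem theorem7p1:
  fixes d n :: nat and \<sigma> :: "nat \<Rightarrow> nat \<Rightarrow> nat"
  assumes "d \<ge> 3" and "n \<ge> 1" and "\<forall>j\<in>{1..d-1}. \<sigma> j permutes {1..n}"
  shows "universally_simplified d (emp_copula_measure d n \<sigma>)"
proof -
  interpret empirical_copula d n \<sigma>
    using assms by unfold_locales simp_all
  show ?thesis by (rule universally_simplified)
qed

end
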